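(* Let $\langle X,\tau\rangle$ be a topological space that is a continuous open image of the Sorgenfrey line, and let $F\subseteq X$ be a nonempty closed subset such that the subspace $\langle F,\tau\upharpoonright F\rangle$ has no isolated points. Then $\langle F,\tau\upharpoonright F\rangle$ is a continuous open image of the Sorgenfrey line.
   Context: The Sorgenfrey line is $\mathbb R$ with topology generated by $\{[a,b)\}$; "continuous open image" means image under a continuous open surjection. *)

theory Defs
  imports "HOL-Analysis.Analysis"
begin

definition sorgenfrey_line :: "real topology" where
  "sorgenfrey_line = topology_generated_by {{a..<b} | a b. a < b}"

definition cont_open_image_of_sorgenfrey :: "'a topology \<Rightarrow> bool" where
  "cont_open_image_of_sorgenfrey X \<longleftrightarrow>
     (\<exists>f. continuous_map sorgenfrey_line X f \<and> open_map sorgenfrey_line X f \<and>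
          f ` topspace sorgenfrey_line = topspace X)"

definition no_isolated_points :: "'a topology \<Rightarrow> bool" where
  "no_isolated_points X \<longleftrightarrow> (\<forall>x\<in>topspace X. \<not> openin X {x})"

end

theory Submission
  imports Defs
begin

text \<open>Pull \<open>F\<close> back to \<open>G = f\<^sup>-\<^sup>1(F)\<close>. Being closed in the Sorgenfrey line, \<open>G\<close> contains the
  infimum of each of its nonempty subsets that is bounded below, and since \<open>f\<close> is open, \<open>G\<close> has no
  point isolated from the right. These two properties make every piece \<open>G \<inter> [b, b + 1)\<close>, \<open>b \<in> G\<close>,
  order isomorphic to \<open>[0, 1)\<close> (by a dyadic exhaustion), and an order isomorphism between such
  sets is a homeomorphism for the Sorgenfrey topology. Laying countably many pieces that cover
  \<open>G\<close> onto the intervals \<open>[k, k + 1)\<close> gives a continuous open map of the Sorgenfrey line onto the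
  subspace \<open>G\<close>; composing it with the restriction of \<open>f\<close> to \<open>G \<rightarrow> F\<close> proves the theorem.\<close>

lemma topspace_sorgenfrey_line [simp]: "topspace sorgenfrey_line = UNIV"
proof -
  have "x \<in> \<Union>{{a..<b} | a b. a < b}" for x :: real
    by (rule UnionI[of "{x..<x+1}"]) force+
  then show ?thesis
    unfolding sorgenfrey_line_def by auto
qed

lemma openin_sorgenfrey_line:
  "openin sorgenfrey_line U \<longleftrightarrow> (\<forall>x\<in>U. \<exists>e>0. {x..<x+e} \<subseteq> U)"
proof
  assume "openin sorgenfrey_line U"
  then have "generate_topology_on {{a..<b} | a b. a < b} U"
    by (simp add: sorgenfrey_line_def openin_topology_generated_by_iff)
  then show "\<forall>x\<in>U. \<exists>e>0. {x..<x+e} \<subseteq> U"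
  proof induction
    case (Int V W)
    show ?case
    proof
      fix x assume "x \<in> V \<inter> W"
      then obtain e1 e2 where "e1 > 0" "{x..<x+e1} \<subseteq> V" "e2 > 0" "{x..<x+e2} \<subseteq> W"
        using Int by blast
      then show "\<exists>e>0. {x..<x+e} \<subseteq> V \<inter> W"
        by (intro exI[of _ "min e1 e2"]) (auto simp: subset_eq)
    qed
  next
    case (Basis s)
    then obtain a b where "s = {a..<b}" by blast
    then show ?case by (intro ballI exI[of _ "b - _"]) auto
  qed blast+
next
  assume "\<forall>x\<in>U. \<exists>e>0. {x..<x+e} \<subseteq> U"
  then obtain e where e: "\<And>x. x \<in> U \<Longrightarrow> e x > 0 \<and> {x..<x + e x} \<subseteq> U" by metis
  have "generate_topology_on {{a..<b} | a b. a < b} (\<Union>x\<in>U. {x..<x + e x})"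
    using e by (force intro: generate_topology_on.UN generate_topology_on.Basis)
  moreover have "(\<Union>x\<in>U. {x..<x + e x}) = U"
    using e by fastforce
  ultimately show "openin sorgenfrey_line U"
    by (simp add: sorgenfrey_line_def openin_topology_generated_by_iff)
qed

lemma openin_sorgenfrey_line_atLeastLessThan: "openin sorgenfrey_line {a..<b}"
  unfolding openin_sorgenfrey_line by (intro ballI exI[of _ "b - _"]) auto

lemma closedin_sorgenfrey_line_Inf:
  assumes "closedin sorgenfrey_line G" "A \<subseteq> G" "A \<noteq> {}" "bdd_below A"
  shows "Inf A \<in> G"
proof (rule ccontr)
  assume "Inf A \<notin> G"
  moreover have "openin sorgenfrey_line (- G)"
    using assms(1) by (simp add: closedin_def Compl_eq_Diff_UNIV)
  ultimately obtain e where "e > 0" "{Inf A..<Inf A + e} \<inter> G = {}"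
    unfolding openin_sorgenfrey_line by blast
  moreover obtain s where "s \<in> A" "s < Inf A + e"
    using cInf_lessD[OF assms(3), of "Inf A + e"] \<open>e > 0\<close> by auto
  moreover have "Inf A \<le> s"
    using \<open>s \<in> A\<close> assms(4) by (rule cInf_lower)
  ultimately show False
    using assms(2) by auto
qed

lemma sorgenfrey_right_accumulation:
  assumes "no_isolated_points (subtopology sorgenfrey_line G)" "t \<in> G" "e > 0"
  shows "\<exists>s\<in>G. t < s \<and> s < t + e"
proof (rule ccontr)
  assume "\<not> (\<exists>s\<in>G. t < s \<and> s < t + e)"
  then have "{t} = G \<inter> {t..<t+e}"
    using assms(2,3) by force
  then have "openin (subtopology sorgenfrey_line G) {t}"
    by (metis openin_sorgenfrey_line_atLeastLessThan openin_subtopology_Int2)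
  then show False
    using assms(1,2) by (simp add: no_isolated_points_def)
qed

lemma dyadic_less_one_iff: "real k / 2 ^ n < 1 \<longleftrightarrow> k < 2 ^ n"
proof -
  have "real k / 2 ^ n < 1 \<longleftrightarrow> real k < real (2 ^ n)"
    by (simp add: divide_less_eq)
  then show ?thesis
    by (simp only: of_nat_less_iff)
qed

lemma dyadic_between:
  fixes t t' :: real
  assumes "0 \<le> t" "t < t'"
  shows "\<exists>n k. t < real k / 2 ^ n \<and> real (Suc k) / 2 ^ n < t'"
proof -
  obtain n where "(1/2::real) ^ n < (t' - t) / 2"
    using real_arch_pow_inv[of "(t' - t) / 2" "1/2"] assms by auto
  then have n: "2 / 2 ^ n < t' - t"
    by (simp add: field_simps power_divide)
  define k where "k = nat \<lfloor>t * 2 ^ n\<rfloor> + 1"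
  have k: "real k = real_of_int \<lfloor>t * 2 ^ n\<rfloor> + 1"
    using assms(1) by (simp add: k_def)
  have lo: "t * 2 ^ n < real k" and hi: "real (Suc k) \<le> t * 2 ^ n + 2"
    unfolding of_nat_Suc k by linarith+
  have "t < real k / 2 ^ n"
    using lo by (simp add: field_simps)
  moreover have "real (Suc k) / 2 ^ n \<le> (t * 2 ^ n + 2) / 2 ^ n"
    using hi by (rule divide_right_mono) simp
  moreover have "(t * 2 ^ n + 2) / 2 ^ n = t + 2 / 2 ^ n"
    by (simp add: add_divide_distrib)
  ultimately show ?thesis
    using n by (intro exI[of _ n] exI[of _ k]) linarith
qed

lemma dyadic_above:
  fixes t :: real
  assumes "0 \<le> t" "t < 1"
  shows "\<exists>n k. k < 2 ^ n \<and> t \<le> real k / 2 ^ n"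
proof -
  obtain n k where "t < real k / 2 ^ n" "real (Suc k) / 2 ^ n < 1"
    using dyadic_between[OF assms] by blast
  then show ?thesis
    using dyadic_less_one_iff[of "Suc k" n] by (intro exI[of _ n] exI[of _ k]) auto
qed

locale right_perfect_piece =
  fixes P :: "real set" and a r :: real
  assumes min_in: "a \<in> P" and subset: "P \<subseteq> {a..<r}"
    and Inf_in: "\<And>A. A \<subseteq> P \<Longrightarrow> A \<noteq> {} \<Longrightarrow> Inf A \<in> P"
    and right_accumulation: "\<And>x e. x \<in> P \<Longrightarrow> e > 0 \<Longrightarrow> \<exists>y\<in>P. x < y \<and> y < x + e"
begin

lemma endpoints_less: "a < r"
  using min_in subset by auto

text \<open>Cut the part of \<open>P\<close> in \<open>[x, y)\<close> at the first point of \<open>P\<close> beyond the midpoint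
  between \<open>x\<close> and \<open>sup (P \<inter> [x, y))\<close>; both halves then have half the diameter.\<close>
definition bisect :: "real \<Rightarrow> real \<Rightarrow> real" where
  "bisect x y = Inf (P \<inter> {(x + Sup (P \<inter> {x..<y})) / 2..<y})"

lemma bisect_halves:
  assumes x: "x \<in> P" and xy: "x < y" and l: "P \<inter> {x..<y} \<subseteq> {x..x+l}"
  shows "bisect x y \<in> P" "x < bisect x y" "bisect x y < y"
    "P \<inter> {x..<bisect x y} \<subseteq> {x..x+l/2}"
    "P \<inter> {bisect x y..<y} \<subseteq> {bisect x y..bisect x y+l/2}"
proof -
  define S where "S = P \<inter> {x..<y}"
  define m where "m = (x + Sup S) / 2"
  define T where "T = P \<inter> {m..<y}"
  have bisect_eq: "bisect x y = Inf T"
    by (simp add: bisect_def T_def m_def S_def)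
  obtain z where z: "z \<in> P" "x < z" "z < y"
    using right_accumulation[OF x, of "y - x"] xy by auto
  have S_ne: "S \<noteq> {}" and S_bdd: "bdd_above S"
    using x xy by (auto simp: S_def intro: bdd_aboveI[of _ y])
  have "z \<le> Sup S"
    using z S_bdd by (auto simp: S_def intro: cSup_upper)
  then have x_m: "x < m" and m_Sup: "m < Sup S"
    using z by (simp_all add: m_def)
  have Sup_le: "Sup S \<le> x + l"
    using l S_ne by (auto intro!: cSup_least simp: S_def)
  obtain w where w: "w \<in> S" "m < w"
    using less_cSupE[OF m_Sup S_ne] by blast
  then have "w \<in> T"
    by (simp add: T_def S_def)
  have T_bdd: "bdd_below T"
    by (auto simp: T_def intro: bdd_belowI[of _ m])
  have m_le: "m \<le> Inf T" and le_w: "Inf T \<le> w"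
    using \<open>w \<in> T\<close> T_bdd by (auto intro!: cInf_greatest cInf_lower simp: T_def)
  show "bisect x y \<in> P"
    unfolding bisect_eq by (rule Inf_in) (use \<open>w \<in> T\<close> in \<open>auto simp: T_def\<close>)
  show "x < bisect x y"
    using x_m m_le by (simp add: bisect_eq)
  show "bisect x y < y"
    using le_w w by (simp add: bisect_eq S_def)
  show "P \<inter> {x..<bisect x y} \<subseteq> {x..x+l/2}"
  proof
    fix c assume c: "c \<in> P \<inter> {x..<bisect x y}"
    have "c < m"
    proof (rule ccontr)
      assume "\<not> c < m"
      then have "c \<in> T"
        using c le_w w by (auto simp: T_def S_def bisect_eq)
      then show False
        using c T_bdd cInf_lower[of c T] by (auto simp: bisect_eq)
    qed
    then show "c \<in> {x..x+l/2}"
      using c Sup_le by (simp add: m_def)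
  qed
  show "P \<inter> {bisect x y..<y} \<subseteq> {bisect x y..bisect x y+l/2}"
  proof
    fix c assume c: "c \<in> P \<inter> {bisect x y..<y}"
    then have "c \<le> Sup S"
      using \<open>x < bisect x y\<close> S_bdd by (auto simp: S_def intro: cSup_upper)
    then show "c \<in> {bisect x y..bisect x y+l/2}"
      using c m_le Sup_le by (simp add: m_def bisect_eq)
  qed
qed

text \<open>\<open>grid n k\<close> is the point of \<open>P\<close> at dyadic position \<open>k / 2^n\<close>; the top position \<open>2^n\<close>
  is mapped to the excluded endpoint \<open>r\<close>.\<close>
fun grid :: "nat \<Rightarrow> nat \<Rightarrow> real" where
  "grid 0 k = (if k = 0 then a else r)"
| "grid (Suc n) k =
    (if even k then grid n (k div 2) else bisect (grid n (k div 2)) (grid n (Suc (k div 2))))"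

lemma grid_0 [simp]: "grid n 0 = a"
  by (induction n) auto

lemma grid_top [simp]: "grid n (2 ^ n) = r"
  by (induction n) auto

lemma grid_gap:
  assumes "k < 2 ^ n"
  shows "grid n k \<in> P" "grid n k < grid n (Suc k)"
    "P \<inter> {grid n k..<grid n (Suc k)} \<subseteq> {grid n k..grid n k + (r - a) / 2 ^ n}"
proof -
  have "grid n k \<in> P \<and> grid n k < grid n (Suc k) \<and>
    P \<inter> {grid n k..<grid n (Suc k)} \<subseteq> {grid n k..grid n k + (r - a) / 2 ^ n}"
    using assms
  proof (induction n arbitrary: k)
    case 0
    then show ?case
      using min_in subset endpoints_less by auto
  next
    case (Suc n)
    define x where "x = grid n (k div 2)"
    define y where "y = grid n (Suc (k div 2))"
    have "k div 2 < 2 ^ n"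
      using Suc.prems by auto
    then have "x \<in> P" "x < y" "P \<inter> {x..<y} \<subseteq> {x..x + (r - a) / 2 ^ n}"
      using Suc.IH by (auto simp: x_def y_def)
    note halves = bisect_halves[OF this]
    have half: "(r - a) / 2 ^ n / 2 = (r - a) / 2 ^ Suc n"
      by simp
    show ?case
    proof (cases "even k")
      case True
      then have "grid (Suc n) k = x" "grid (Suc n) (Suc k) = bisect x y"
        by (auto simp: x_def y_def)
      then show ?thesis
        using halves \<open>x \<in> P\<close> half by auto
    next
      case False
      then have "Suc k div 2 = Suc (k div 2)"
        by presburger
      then have "grid (Suc n) k = bisect x y" "grid (Suc n) (Suc k) = y"
        using False by (auto simp: x_def y_def)
      then show ?thesis
        using halves half by auto
    qed
  qed
  then show "grid n k \<in> P" "grid n k < grid n (Suc k)"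
    "P \<inter> {grid n k..<grid n (Suc k)} \<subseteq> {grid n k..grid n k + (r - a) / 2 ^ n}"
    by auto
qed

lemma grid_strict_mono: "k < k' \<Longrightarrow> k' \<le> 2 ^ n \<Longrightarrow> grid n k < grid n k'"
proof (induction k' rule: less_induct)
  case (less k')
  then obtain j where j: "k' = Suc j"
    by (cases k') auto
  then have "grid n j < grid n k'"
    using grid_gap(2)[of j n] less.prems by simp
  moreover have "grid n k \<le> grid n j"
    using less j by (cases "k = j") fastforce+
  ultimately show ?case
    by simp
qed

lemma grid_mono: "k \<le> k' \<Longrightarrow> k' \<le> 2 ^ n \<Longrightarrow> grid n k \<le> grid n k'"
  using grid_strict_mono[of k k' n] by (cases "k = k'") auto

lemma grid_refine: "grid (n + m) (k * 2 ^ m) = grid n k"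
  by (induction m) simp_all

lemma grid_mono_position:
  assumes "k \<le> 2 ^ n" "k' \<le> 2 ^ n'" "real k / 2 ^ n \<le> real k' / 2 ^ n'"
  shows "grid n k \<le> grid n' k'"
proof -
  have "real (k * 2 ^ n') \<le> real (k' * 2 ^ n)"
    using assms(3) by (simp add: field_simps)
  then have "k * 2 ^ n' \<le> k' * 2 ^ n"
    by linarith
  moreover have "k' * 2 ^ n \<le> 2 ^ (n' + n)"
    using assms(2) by (simp add: power_add)
  ultimately have "grid (n + n') (k * 2 ^ n') \<le> grid (n' + n) (k' * 2 ^ n)"
    using grid_mono by (simp add: add.commute)
  then show ?thesis
    by (simp only: grid_refine)
qed

lemma grid_less_imp_position_less:
  "k \<le> 2 ^ n \<Longrightarrow> k' \<le> 2 ^ n' \<Longrightarrow> grid n k < grid n' k' \<Longrightarrow> real k / 2 ^ n < real k' / 2 ^ n'"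
  using grid_mono_position[of k' n' k n] by force

lemma grid_dense:
  assumes c: "c \<in> P" and "c < c'"
  shows "\<exists>n k. k < 2 ^ n \<and> c < grid n k \<and> grid n k < c'"
proof -
  obtain z where z: "z \<in> P" "c < z" "z < c'"
    using right_accumulation[OF c, of "c' - c"] assms by auto
  obtain n where "(1/2::real) ^ n < (z - c) / (r - a)"
    using real_arch_pow_inv[of "(z - c) / (r - a)" "1/2"] z endpoints_less by auto
  then have mesh: "(r - a) / 2 ^ n < z - c"
    using endpoints_less by (simp add: field_simps power_divide)
  txt \<open>The grid point after the last one below \<open>c\<close> lies in \<open>(c, z]\<close>, as the mesh is below \<open>z - c\<close>.\<close>
  define K where "K = {k. k \<le> 2 ^ n \<and> grid n k \<le> c}"
  have "finite K" "0 \<in> K"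
    using c subset by (auto simp: K_def)
  define k where "k = Max K"
  have "k \<in> K" "Suc k \<notin> K"
    using Max_in[OF \<open>finite K\<close>] Max_ge[OF \<open>finite K\<close>, of "Suc k"] \<open>0 \<in> K\<close>
    by (auto simp: k_def)
  have "grid n (2 ^ n) > c"
    using c subset by auto
  with \<open>k \<in> K\<close> have k: "k < 2 ^ n" "grid n k \<le> c"
    by (auto simp: K_def order.order_iff_strict)
  with \<open>Suc k \<notin> K\<close> have c_less: "c < grid n (Suc k)"
    by (auto simp: K_def)
  have below_z: "grid n (Suc k) \<le> z"
  proof (rule ccontr)
    assume "\<not> grid n (Suc k) \<le> z"
    then have "z \<le> grid n k + (r - a) / 2 ^ n"
      using grid_gap(3)[OF k(1)] z k(2) by auto
    then show False
      using k(2) mesh by linarith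
  qed
  then have "Suc k < 2 ^ n"
    using k(1) z subset by (cases "Suc k = 2 ^ n") auto
  then show ?thesis
    using c_less below_z z by (intro exI[of _ n] exI[of _ "Suc k"]) auto
qed

definition iso :: "real \<Rightarrow> real" where
  "iso t = Inf {grid n k | n k. k < 2 ^ n \<and> t \<le> real k / 2 ^ n}"

lemma iso_le_grid: "k < 2 ^ n \<Longrightarrow> t \<le> real k / 2 ^ n \<Longrightarrow> iso t \<le> grid n k"
  unfolding iso_def
  by (rule cInf_lower, blast, rule bdd_belowI[of _ a]) (use grid_gap(1) subset in force)

lemma iso_greatest:
  assumes t: "0 \<le> t" "t < 1"
    and le: "\<And>n k. k < 2 ^ n \<Longrightarrow> t \<le> real k / 2 ^ n \<Longrightarrow> c \<le> grid n k"
  shows "c \<le> iso t"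
proof -
  obtain n k where "k < 2 ^ n" "t \<le> real k / 2 ^ n"
    using dyadic_above[OF t] by blast
  then show ?thesis
    unfolding iso_def using le by (intro cInf_greatest) blast+
qed

lemma iso_in:
  assumes t: "0 \<le> t" "t < 1"
  shows "iso t \<in> P"
proof -
  obtain n k where "k < 2 ^ n" "t \<le> real k / 2 ^ n"
    using dyadic_above[OF t] by blast
  then show ?thesis
    unfolding iso_def using grid_gap(1) by (intro Inf_in) blast+
qed

lemma iso_strict_mono: "strict_mono_on {0..<1} iso"
proof (rule strict_mono_onI)
  fix t t' :: real assume "t \<in> {0..<1}" "t' \<in> {0..<1}" "t < t'"
  then obtain n k where nk: "t < real k / 2 ^ n" "real (Suc k) / 2 ^ n < t'" "t' < 1"
    using dyadic_between[of t t'] by auto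
  then have k: "Suc k < 2 ^ n"
    using dyadic_less_one_iff[of "Suc k" n] by linarith
  have "iso t \<le> grid n k"
    using nk k by (intro iso_le_grid) auto
  also have "\<dots> < grid n (Suc k)"
    using grid_gap(2) k by simp
  also have "\<dots> \<le> iso t'"
    using \<open>t' \<in> {0..<1}\<close> nk k by (intro iso_greatest grid_mono_position) auto
  finally show "iso t < iso t'" .
qed

definition position :: "real \<Rightarrow> real" where
  "position c = Inf {real k / 2 ^ n | n k. k < 2 ^ n \<and> c \<le> grid n k}"

lemma position_le:
  assumes "k < 2 ^ n" "c \<le> grid n k"
  shows "position c \<le> real k / 2 ^ n"
  unfolding position_def using assms
  by (intro cInf_lower, blast, intro bdd_belowI[of _ 0]) auto

lemma le_position:
  assumes c: "c \<in> P" and "k < 2 ^ n" "grid n k < c"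
  shows "real k / 2 ^ n \<le> position c"
proof -
  obtain n0 k0 where "k0 < 2 ^ n0" "c < grid n0 k0"
    using grid_dense[OF c, of r] c subset by fastforce
  then have ne: "{real k / 2 ^ n | n k. k < 2 ^ n \<and> c \<le> grid n k} \<noteq> {}"
    by fastforce
  show ?thesis
    unfolding position_def
  proof (rule cInf_greatest[OF ne])
    fix d assume "d \<in> {real k / 2 ^ n | n k. k < 2 ^ n \<and> c \<le> grid n k}"
    then obtain n' k' where "d = real k' / 2 ^ n'" "k' < 2 ^ n'" "c \<le> grid n' k'"
      by blast
    then show "real k / 2 ^ n \<le> d"
      using assms grid_less_imp_position_less[of k n k' n'] by auto
  qed
qed

lemma position_in_unit:
  assumes c: "c \<in> P"
  shows "0 \<le> position c" "position c < 1"
proof -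
  obtain n k where nk: "k < 2 ^ n" "c < grid n k"
    using grid_dense[OF c, of r] c subset by fastforce
  then show "0 \<le> position c"
    unfolding position_def by (intro cInf_greatest) force+
  show "position c < 1"
    using nk position_le[of k n c] dyadic_less_one_iff[of k n] by linarith
qed

lemma iso_position:
  assumes c: "c \<in> P"
  shows "iso (position c) = c"
proof (rule antisym)
  show "iso (position c) \<le> c"
  proof (rule ccontr)
    assume "\<not> iso (position c) \<le> c"
    then obtain n k where nk: "k < 2 ^ n" "c < grid n k" "grid n k < iso (position c)"
      using grid_dense[OF c, of "iso (position c)"] by auto
    then have "iso (position c) \<le> grid n k"
      using iso_le_grid position_le by simp
    with nk(3) show False
      by simp
  qed
  show "c \<le> iso (position c)"
  proof (rule iso_greatest[OF position_in_unit[OF c]])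
    fix n k assume nk: "k < 2 ^ n" "position c \<le> real k / 2 ^ n"
    show "c \<le> grid n k"
    proof (rule ccontr)
      assume "\<not> c \<le> grid n k"
      then obtain n' k' where "k' < 2 ^ n'" "grid n k < grid n' k'" "grid n' k' < c"
        using grid_dense[OF grid_gap(1)[OF nk(1)], of c] by auto
      then show False
        using nk le_position[OF c, of k' n'] grid_less_imp_position_less[of k n k' n'] by auto
    qed
  qed
qed

lemma order_iso: "strict_mono_on {0..<1} iso \<and> iso ` {0..<1} = P"
proof -
  have "c \<in> iso ` {0..<1}" if "c \<in> P" for c
    using iso_position[OF that] position_in_unit[OF that] by (metis atLeastLessThan_iff imageI)
  then show ?thesis
    using iso_strict_mono iso_in by auto
qed

end

lemma strict_mono_on_image_Int_atLeastLessThan: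
  fixes h :: "'a::linorder \<Rightarrow> 'b::linorder"
  assumes "strict_mono_on S h" "t \<in> S" "t' \<in> S"
  shows "h ` (S \<inter> {t..<t'}) = h ` S \<inter> {h t..<h t'}"
  using assms by (auto simp: strict_mono_on_less strict_mono_on_less_eq)

lemma floor_frac_add_small:
  fixes x d :: real
  assumes "0 \<le> d" "frac x + d < 1"
  shows "\<lfloor>x + d\<rfloor> = \<lfloor>x\<rfloor>" "frac (x + d) = frac x + d"
proof -
  show "\<lfloor>x + d\<rfloor> = \<lfloor>x\<rfloor>"
    using assms of_int_floor_le[of x] unfolding frac_def by (intro floor_unique) linarith+
  then show "frac (x + d) = frac x + d"
    by (simp add: frac_def)
qed

lemma no_isolated_points_open_map:
  assumes "open_map Y X g" "no_isolated_points X"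
  shows "no_isolated_points Y"
  unfolding no_isolated_points_def
proof (intro ballI notI)
  fix y assume "y \<in> topspace Y" "openin Y {y}"
  then have "openin X {g y}"
    using assms(1) by (metis image_empty image_insert open_map_def)
  then show False
    using assms(2) openin_subset by (fastforce simp: no_isolated_points_def)
qed

lemma cont_open_image_of_sorgenfrey_compose:
  assumes "cont_open_image_of_sorgenfrey Y"
    and "continuous_map Y X g" "open_map Y X g" "g ` topspace Y = topspace X"
  shows "cont_open_image_of_sorgenfrey X"
proof -
  obtain f where "continuous_map sorgenfrey_line Y f" "open_map sorgenfrey_line Y f"
    "f ` topspace sorgenfrey_line = topspace Y"
    using assms(1) by (auto simp: cont_open_image_of_sorgenfrey_def)
  then show ?thesis
    unfolding cont_open_image_of_sorgenfrey_def using assms(2-4)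
    by (intro exI[of _ "g \<circ> f"]) (metis continuous_map_compose open_map_compose image_comp)
qed

lemma continuous_map_sorgenfrey_lineI:
  fixes H :: "real \<Rightarrow> real"
  assumes right_cont: "\<And>x e. e > 0 \<Longrightarrow> \<exists>d>0. H ` {x..<x+d} \<subseteq> {H x..<H x + e}"
  shows "continuous_map sorgenfrey_line sorgenfrey_line H"
  unfolding continuous_map_def
proof (intro conjI allI impI)
  fix U assume U: "openin sorgenfrey_line U"
  show "openin sorgenfrey_line {x \<in> topspace sorgenfrey_line. H x \<in> U}"
    unfolding openin_sorgenfrey_line
  proof (intro ballI)
    fix x assume "x \<in> {x \<in> topspace sorgenfrey_line. H x \<in> U}"
    then obtain e where "e > 0" "{H x..<H x + e} \<subseteq> U"
      using U by (auto simp: openin_sorgenfrey_line)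
    moreover obtain d where "d > 0" "H ` {x..<x+d} \<subseteq> {H x..<H x + e}"
      using right_cont[OF \<open>e > 0\<close>] by blast
    ultimately show "\<exists>d>0. {x..<x+d} \<subseteq> {x \<in> topspace sorgenfrey_line. H x \<in> U}"
      by (intro exI[of _ d]) auto
  qed
qed simp

lemma open_map_sorgenfrey_line_subtopologyI:
  fixes H :: "real \<Rightarrow> real"
  assumes range: "range H \<subseteq> G"
    and right_open: "\<And>x d. d > 0 \<Longrightarrow> \<exists>e>0. G \<inter> {H x..<H x + e} \<subseteq> H ` {x..<x+d}"
  shows "open_map sorgenfrey_line (subtopology sorgenfrey_line G) H"
  unfolding open_map_def
proof (intro allI impI)
  fix U assume U: "openin sorgenfrey_line U"
  have "\<forall>x\<in>U. \<exists>e>0. G \<inter> {H x..<H x + e} \<subseteq> H ` U"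
  proof
    fix x assume "x \<in> U"
    then obtain d where "d > 0" "{x..<x+d} \<subseteq> U"
      using U by (auto simp: openin_sorgenfrey_line)
    moreover obtain e where "e > 0" "G \<inter> {H x..<H x + e} \<subseteq> H ` {x..<x+d}"
      using right_open[OF \<open>d > 0\<close>] by blast
    moreover have "H ` {x..<x+d} \<subseteq> H ` U"
      using \<open>{x..<x+d} \<subseteq> U\<close> by (rule image_mono)
    ultimately show "\<exists>e>0. G \<inter> {H x..<H x + e} \<subseteq> H ` U"
      by blast
  qed
  then obtain e where e: "\<forall>x\<in>U. e x > 0 \<and> G \<inter> {H x..<H x + e x} \<subseteq> H ` U"
    by (metis (no_types, lifting) bchoice)
  define V where "V = (\<Union>x\<in>U. {H x..<H x + e x})"
  have "openin sorgenfrey_line V"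
    unfolding V_def by (rule openin_Union) (auto simp: openin_sorgenfrey_line_atLeastLessThan)
  moreover have "H ` U = G \<inter> V"
  proof
    show "H ` U \<subseteq> G \<inter> V"
      using e range by (auto simp: V_def)
    show "G \<inter> V \<subseteq> H ` U"
      using e by (auto simp: V_def)
  qed
  ultimately show "openin (subtopology sorgenfrey_line G) (H ` U)"
    by (simp add: openin_subtopology_Int2)
qed

lemma cont_open_image_of_sorgenfrey_subspaceI:
  fixes H :: "real \<Rightarrow> real"
  assumes range: "range H = G"
    and right_cont: "\<And>x e. e > 0 \<Longrightarrow> \<exists>d>0. H ` {x..<x+d} \<subseteq> {H x..<H x + e}"
    and right_open: "\<And>x d. d > 0 \<Longrightarrow> \<exists>e>0. G \<inter> {H x..<H x + e} \<subseteq> H ` {x..<x+d}"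
  shows "cont_open_image_of_sorgenfrey (subtopology sorgenfrey_line G)"
proof -
  have "continuous_map sorgenfrey_line (subtopology sorgenfrey_line G) H"
    using continuous_map_sorgenfrey_lineI[OF right_cont] range
    by (simp add: continuous_map_in_subtopology image_subset_iff_funcset[symmetric])
  moreover have "open_map sorgenfrey_line (subtopology sorgenfrey_line G) H"
    using range right_open by (intro open_map_sorgenfrey_line_subtopologyI) auto
  ultimately show ?thesis
    unfolding cont_open_image_of_sorgenfrey_def using range by (intro exI[of _ H]) simp
qed

lemma sorgenfrey_piece:
  assumes closed: "closedin sorgenfrey_line G"
    and perfect: "no_isolated_points (subtopology sorgenfrey_line G)" and "b \<in> G"
  shows "right_perfect_piece (G \<inter> {b..<b+1}) b (b+1)"
proof
  show "b \<in> G \<inter> {b..<b+1}" "G \<inter> {b..<b+1} \<subseteq> {b..<b+1}"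
    using \<open>b \<in> G\<close> by auto
next
  fix A assume A: "A \<subseteq> G \<inter> {b..<b+1}" "A \<noteq> {}"
  then obtain z where "z \<in> A"
    by blast
  have "bdd_below A"
    by (rule bdd_belowI[of _ b]) (use A in auto)
  then have "Inf A \<in> G" "Inf A \<le> z"
    using closedin_sorgenfrey_line_Inf[OF closed] A \<open>z \<in> A\<close> by (auto intro: cInf_lower)
  moreover have "b \<le> Inf A"
    by (rule cInf_greatest) (use A in auto)
  ultimately show "Inf A \<in> G \<inter> {b..<b+1}"
    using A \<open>z \<in> A\<close> by auto
next
  fix x e :: real assume x: "x \<in> G \<inter> {b..<b+1}" and "e > 0"
  then obtain y where "y \<in> G" "x < y" "y < x + min e (b + 1 - x)"
    using sorgenfrey_right_accumulation[OF perfect, of x "min e (b + 1 - x)"] by auto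
  then show "\<exists>y\<in>G \<inter> {b..<b+1}. x < y \<and> y < x + e"
    using x by (intro bexI[of _ y]) auto
qed

lemma sorgenfrey_pieces_cover:
  assumes closed: "closedin sorgenfrey_line G" and "G \<noteq> {}"
  obtains \<beta> :: "int \<Rightarrow> real"
  where "\<And>k. \<beta> k \<in> G" "\<And>s. s \<in> G \<Longrightarrow> \<beta> \<lfloor>s\<rfloor> \<le> s \<and> s < \<beta> \<lfloor>s\<rfloor> + 1"
proof -
  obtain g where "g \<in> G"
    using \<open>G \<noteq> {}\<close> by blast
  define \<beta> where "\<beta> k = (if G \<inter> {of_int k..} = {} then g else Inf (G \<inter> {of_int k..}))" for k :: int
  have bdd: "bdd_below (G \<inter> {of_int k..})" for k :: int
    by (rule bdd_belowI[of _ "of_int k"]) auto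
  have "\<beta> k \<in> G" for k
    using closedin_sorgenfrey_line_Inf[OF closed _ _ bdd] \<open>g \<in> G\<close> by (auto simp: \<beta>_def)
  moreover have "\<beta> \<lfloor>s\<rfloor> \<le> s \<and> s < \<beta> \<lfloor>s\<rfloor> + 1" if "s \<in> G" for s
  proof -
    have "s \<in> G \<inter> {of_int \<lfloor>s\<rfloor>..}"
      using that by simp
    then have "\<beta> \<lfloor>s\<rfloor> \<le> s" "of_int \<lfloor>s\<rfloor> \<le> \<beta> \<lfloor>s\<rfloor>"
      using bdd by (auto simp: \<beta>_def intro: cInf_lower cInf_greatest)
    then show ?thesis
      by linarith
  qed
  ultimately show thesis
    using that by blast
qed

locale sorgenfrey_pieces =
  fixes G :: "real set" and \<beta> :: "int \<Rightarrow> real" and h :: "real \<Rightarrow> real \<Rightarrow> real"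
  assumes piece_mono: "strict_mono_on {0..<1} (h (\<beta> k))"
    and piece_image: "h (\<beta> k) ` {0..<1} = G \<inter> {\<beta> k..<\<beta> k + 1}"
    and pieces_cover: "s \<in> G \<Longrightarrow> \<beta> \<lfloor>s\<rfloor> \<le> s \<and> s < \<beta> \<lfloor>s\<rfloor> + 1"
    and right_accumulation: "t \<in> G \<Longrightarrow> e > 0 \<Longrightarrow> \<exists>s\<in>G. t < s \<and> s < t + e"
begin

definition glued :: "real \<Rightarrow> real" where
  "glued x = h (\<beta> \<lfloor>x\<rfloor>) (frac x)"

lemma glued_shift: "0 \<le> d \<Longrightarrow> frac x + d < 1 \<Longrightarrow> glued (x + d) = h (\<beta> \<lfloor>x\<rfloor>) (frac x + d)"
  by (simp add: glued_def floor_frac_add_small)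

lemma glued_in: "glued x \<in> G \<inter> {\<beta> \<lfloor>x\<rfloor>..<\<beta> \<lfloor>x\<rfloor> + 1}"
proof -
  have "frac x \<in> {0..<1}"
    using frac_lt_1 by simp
  then have "glued x \<in> h (\<beta> \<lfloor>x\<rfloor>) ` {0..<1}"
    unfolding glued_def by (rule imageI)
  then show ?thesis
    by (simp only: piece_image)
qed

lemma range_glued: "range glued = G"
proof
  show "range glued \<subseteq> G"
    using glued_in by blast
  show "G \<subseteq> range glued"
  proof
    fix s assume "s \<in> G"
    then have "s \<in> h (\<beta> \<lfloor>s\<rfloor>) ` {0..<1}"
      using pieces_cover by (simp add: piece_image)
    then obtain t where t: "t \<in> {0..<1}" "s = h (\<beta> \<lfloor>s\<rfloor>) t"
      by (rule imageE) simp
    have "glued (of_int \<lfloor>s\<rfloor> + t) = h (\<beta> \<lfloor>s\<rfloor>) t"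
      using glued_shift[of t "of_int \<lfloor>s\<rfloor>"] t by simp
    then show "s \<in> range glued"
      using t(2) by (metis rangeI)
  qed
qed

lemma glued_image_shift:
  assumes "frac x + d < 1"
  shows "glued ` {x..<x+d} = h (\<beta> \<lfloor>x\<rfloor>) ` {frac x..<frac x + d}"
proof
  show "glued ` {x..<x+d} \<subseteq> h (\<beta> \<lfloor>x\<rfloor>) ` {frac x..<frac x + d}"
  proof
    fix y assume "y \<in> glued ` {x..<x+d}"
    then obtain z where z: "x \<le> z" "z < x + d" "y = glued z"
      by auto
    then have "y = h (\<beta> \<lfloor>x\<rfloor>) (frac x + (z - x))"
      using glued_shift[of "z - x" x] assms by simp
    then show "y \<in> h (\<beta> \<lfloor>x\<rfloor>) ` {frac x..<frac x + d}"
      using z by auto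
  qed
  show "h (\<beta> \<lfloor>x\<rfloor>) ` {frac x..<frac x + d} \<subseteq> glued ` {x..<x+d}"
  proof
    fix y assume "y \<in> h (\<beta> \<lfloor>x\<rfloor>) ` {frac x..<frac x + d}"
    then obtain t where t: "frac x \<le> t" "t < frac x + d" "y = h (\<beta> \<lfloor>x\<rfloor>) t"
      by auto
    then have "y = glued (x + (t - frac x))"
      using glued_shift[of "t - frac x" x] assms by simp
    then show "y \<in> glued ` {x..<x+d}"
      using t by auto
  qed
qed

lemma glued_local_iso:
  assumes "0 < d" "frac x + d < 1"
  shows "glued x < glued (x + d)" "glued ` {x..<x+d} = G \<inter> {glued x..<glued (x + d)}"
proof -
  define b where "b = \<beta> \<lfloor>x\<rfloor>"
  have x: "glued x = h b (frac x)" and xd: "glued (x + d) = h b (frac x + d)"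
    using glued_shift[of 0 x] glued_shift[of d x] assms by (simp_all add: b_def)
  have in_piece: "frac x \<in> {0..<1}" "frac x + d \<in> {0..<1}"
    using assms frac_lt_1[of x] by auto
  show "glued x < glued (x + d)"
    using strict_mono_onD[OF piece_mono in_piece] assms(1) by (simp add: x xd b_def)
  have "glued ` {x..<x+d} = h b ` {frac x..<frac x + d}"
    using glued_image_shift[OF assms(2)] by (simp add: b_def)
  also have "\<dots> = h b ` ({0..<1} \<inter> {frac x..<frac x + d})"
    using in_piece by (simp add: Int_absorb1 subset_eq)
  also have "\<dots> = G \<inter> {b..<b + 1} \<inter> {glued x..<glued (x + d)}"
    using strict_mono_on_image_Int_atLeastLessThan[OF piece_mono in_piece] piece_image
    by (simp add: x xd b_def)
  also have "\<dots> = G \<inter> {glued x..<glued (x + d)}"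
    using glued_in[of x] glued_in[of "x + d"] floor_frac_add_small(1)[of d x] assms
    by (auto simp: b_def)
  finally show "glued ` {x..<x+d} = G \<inter> {glued x..<glued (x + d)}" .
qed

lemma glued_right_continuous:
  assumes "e > 0"
  shows "\<exists>d>0. glued ` {x..<x+d} \<subseteq> {glued x..<glued x + e}"
proof -
  define b where "b = \<beta> \<lfloor>x\<rfloor>"
  have gx: "glued x \<in> G" "b \<le> glued x" "glued x < b + 1" "glued x = h b (frac x)"
    using glued_in[of x] glued_shift[of 0 x] frac_lt_1[of x] by (auto simp: b_def)
  obtain c where c: "c \<in> G" "glued x < c" "c < glued x + min e (b + 1 - glued x)"
    using right_accumulation[of "glued x" "min e (b + 1 - glued x)"] assms gx by auto
  then have "c < glued x + e" "c < b + 1"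
    using min.cobounded1[of e "b + 1 - glued x"] min.cobounded2[of e "b + 1 - glued x"] by linarith+
  then have "c \<in> h b ` {0..<1}"
    using c gx piece_image[of "\<lfloor>x\<rfloor>"] by (simp add: b_def)
  then obtain t where t: "t \<in> {0..<1}" "c = h b t"
    by (rule imageE) simp
  have "frac x < t"
    using strict_mono_on_less[OF piece_mono, of "frac x" t] t c(2) gx(4) frac_lt_1[of x]
    by (simp add: b_def)
  define d where "d = t - frac x"
  have d: "0 < d" "frac x + d < 1" "glued (x + d) = c"
    using \<open>frac x < t\<close> t glued_shift[of d x] by (auto simp: d_def b_def)
  have "glued ` {x..<x+d} \<subseteq> {glued x..<glued x + e}"
    unfolding glued_local_iso(2)[OF d(1,2)] d(3) using \<open>c < glued x + e\<close> by auto
  with d(1) show ?thesis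
    by blast
qed

lemma glued_right_open:
  assumes "d > 0"
  shows "\<exists>e>0. G \<inter> {glued x..<glued x + e} \<subseteq> glued ` {x..<x+d}"
proof -
  define d' where "d' = min d ((1 - frac x) / 2)"
  have "frac x + (1 - frac x) / 2 < 1"
    using frac_lt_1[of x] by (simp add: field_simps)
  then have d': "0 < d'" "frac x + d' < 1" "d' \<le> d"
    using assms frac_lt_1[of x] min.cobounded2[of d "(1 - frac x) / 2"] by (auto simp: d'_def)
  define e where "e = glued (x + d') - glued x"
  have "G \<inter> {glued x..<glued x + e} = glued ` {x..<x+d'}"
    unfolding e_def glued_local_iso(2)[OF d'(1,2)] by simp
  also have "\<dots> \<subseteq> glued ` {x..<x+d}"
    using d'(3) by (intro image_mono) auto
  finally show ?thesis
    using glued_local_iso(1)[OF d'(1,2)] by (intro exI[of _ e]) (simp add: e_def)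
qed

lemma cont_open_image_of_sorgenfrey: "cont_open_image_of_sorgenfrey (subtopology sorgenfrey_line G)"
  using range_glued glued_right_continuous glued_right_open
  by (rule cont_open_image_of_sorgenfrey_subspaceI)

end

lemma cont_open_image_of_sorgenfrey_closed_perfect_subspace:
  assumes closed: "closedin sorgenfrey_line G" and "G \<noteq> {}"
    and perfect: "no_isolated_points (subtopology sorgenfrey_line G)"
  shows "cont_open_image_of_sorgenfrey (subtopology sorgenfrey_line G)"
proof -
  obtain \<beta> where \<beta>: "\<And>k. \<beta> k \<in> G" "\<And>s. s \<in> G \<Longrightarrow> \<beta> \<lfloor>s\<rfloor> \<le> s \<and> s < \<beta> \<lfloor>s\<rfloor> + 1"
    using sorgenfrey_pieces_cover[OF closed \<open>G \<noteq> {}\<close>] by blast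
  have "\<forall>b\<in>G. \<exists>h. strict_mono_on {0..<1::real} h \<and> h ` {0..<1} = G \<inter> {b..<b+1}"
  proof
    fix b assume "b \<in> G"
    then interpret right_perfect_piece "G \<inter> {b..<b+1}" b "b + 1"
      by (rule sorgenfrey_piece[OF closed perfect])
    show "\<exists>h. strict_mono_on {0..<1::real} h \<and> h ` {0..<1} = G \<inter> {b..<b+1}"
      using order_iso by (rule exI[of _ iso])
  qed
  then obtain h where h: "\<forall>b\<in>G. strict_mono_on {0..<1::real} (h b) \<and> h b ` {0..<1} = G \<inter> {b..<b+1}"
    by (rule bchoice[THEN exE])
  interpret sorgenfrey_pieces G \<beta> h
  proof
    show "strict_mono_on {0..<1} (h (\<beta> k))" "h (\<beta> k) ` {0..<1} = G \<inter> {\<beta> k..<\<beta> k + 1}" for k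
      using h \<beta>(1)[of k] by auto
  qed (use \<beta>(2) sorgenfrey_right_accumulation[OF perfect] in auto)
  show ?thesis
    by (rule cont_open_image_of_sorgenfrey)
qed

theorem mainTheorem16:
  fixes X :: "'a topology" and F :: "'a set"
  assumes "cont_open_image_of_sorgenfrey X"
    and "closedin X F" and "F \<noteq> {}"
    and "no_isolated_points (subtopology X F)"
  shows "cont_open_image_of_sorgenfrey (subtopology X F)"
proof -
  obtain f where cont: "continuous_map sorgenfrey_line X f" and opn: "open_map sorgenfrey_line X f"
    and onto: "f ` topspace sorgenfrey_line = topspace X"
    using assms(1) by (auto simp: cont_open_image_of_sorgenfrey_def)
  define G where "G = {t \<in> topspace sorgenfrey_line. f t \<in> F}"
  have onto_F: "f ` topspace (subtopology sorgenfrey_line G) = topspace (subtopology X F)"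
    using onto closedin_subset[OF assms(2)] by (auto simp: G_def)
  have restr_open: "open_map (subtopology sorgenfrey_line G) (subtopology X F) f"
    by (rule open_map_restriction[OF opn G_def[symmetric]])
  have restr_cont: "continuous_map (subtopology sorgenfrey_line G) (subtopology X F) f"
    using cont by (auto simp: G_def continuous_map_in_subtopology continuous_map_from_subtopology)
  have "cont_open_image_of_sorgenfrey (subtopology sorgenfrey_line G)"
  proof (rule cont_open_image_of_sorgenfrey_closed_perfect_subspace)
    show "closedin sorgenfrey_line G"
      unfolding G_def using cont assms(2) by (rule closedin_continuous_map_preimage)
    show "G \<noteq> {}"
      using onto_F assms(3) closedin_subset[OF assms(2)] by auto
    show "no_isolated_points (subtopology sorgenfrey_line G)"
      using restr_open assms(4) by (rule no_isolated_points_open_map)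
  qed
  then show ?thesis
    using restr_cont restr_open onto_F by (rule cont_open_image_of_sorgenfrey_compose)
qed

end
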